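(* Let $G$ be an $(N,k)$ Adinkra obtained from an $N$-cube Adinkra by quotienting by a doubly even $(N,k)$ code $C$, so that its vertices are labeled by cosets $x+C\in\mathbb{Z}_2^N/C$. Let $D$ be a standard form generating set of $C$. For two vertices $x+C$ and $y+C$, there exists an automorphism of $G$ disregarding vertex coloring (i.e. ignoring both heights and the boson/fermion bipartition) mapping $x+C$ to $y+C$ if and only if $\langle x,c\rangle\equiv\langle y,c\rangle\pmod 2$ for every $c\in D$.
   Context: An Adinkra of dimension $N$ is a finite connected simple graph $G=(V,E)$ with: a bipartition of $V$ into bosons and fermions (every edge joins a boson and a fermion); a height function $\mathrm{hgt}:V\to\mathbb{Z}$ with adjacent vertices at heights differing by $1$; a coloring of $E$ by colors $\{1,\dots,N\}$ such that each vertex is incident to exactly one edge of each color; an edge parity $\pi:E\to\mathbb{Z}_2$ (parity $1$ = dashed); such that every path with edge colors $(i,j)$, $i\ne j$, lies in a unique 4-cycle with colors $(i,j,i,j)$, each having an odd number of dashed edges. If $|V|=2^{N-k}$, $G$ is an $(N,k)$ Adinkra. Switching a vertex reverses the parity of its incident edges. A doubly even $(N,k)$ code $C$ is a $k$-dimensional subspace of $\mathbb{Z}_2^N$ all of whose elements have weight $\equiv0\pmod4$; $\langle u,v\rangle=\sum_i u_iv_i \bmod 2$, and $C$ is self-orthogonal. A standard form generating set of $C$ is a basis $g_1,\dots,g_k$ of $C$ such that for some $k$ coordinates the restrictions of the $g_i$ to these coordinates form the $k\times k$ identity matrix. Quotient construction: label the vertices of an $N$-cube Adinkra by $\mathbb{Z}_2^N$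 so that color-$i$ edges join $v$ and $v+e_i$, and (when vertices differing by elements of $C$ have matching edge parities) identify vertices whose labels differ by elements of $C$; the result has vertices $x+C$, color-$i$ edges joining $x+C$ and $x+e_i+C$, and $\langle x,c\rangle$ for $c\in C$ depends only on the coset. An automorphism disregarding vertex coloring is a permutation of $V$ preserving adjacency and edge colors which becomes parity-preserving after switching some set of vertices. *)

theory Defs
  imports Main
begin

definition vecs :: "nat \<Rightarrow> (nat \<Rightarrow> bool) set" where
  "vecs N = {x. \<forall>i. x i \<longrightarrow> i \<in> {1..N}}"

definition vadd :: "(nat \<Rightarrow> bool) \<Rightarrow> (nat \<Rightarrow> bool) \<Rightarrow> (nat \<Rightarrow> bool)" where
  "vadd x y = (\<lambda>i. x i \<noteq> y i)"

definition vzero :: "nat \<Rightarrow> bool" where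
  "vzero = (\<lambda>i. False)"

definition unitv :: "nat \<Rightarrow> (nat \<Rightarrow> bool)" where
  "unitv i = (\<lambda>j. j = i)"

definition weight :: "nat \<Rightarrow> (nat \<Rightarrow> bool) \<Rightarrow> nat" where
  "weight N x = card {i\<in>{1..N}. x i}"

definition ip :: "nat \<Rightarrow> (nat \<Rightarrow> bool) \<Rightarrow> (nat \<Rightarrow> bool) \<Rightarrow> nat" where
  "ip N u v = card {i\<in>{1..N}. u i \<and> v i} mod 2"

definition vsum :: "(nat \<Rightarrow> bool) set \<Rightarrow> (nat \<Rightarrow> bool)" where
  "vsum S = (\<lambda>i. odd (card {v\<in>S. v i}))"

definition z2_span :: "(nat \<Rightarrow> bool) set \<Rightarrow> (nat \<Rightarrow> bool) set" where
  "z2_span B = {vsum S | S. S \<subseteq> B}"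

definition z2_indep :: "(nat \<Rightarrow> bool) set \<Rightarrow> bool" where
  "z2_indep B \<longleftrightarrow> (\<forall>S\<subseteq>B. vsum S = vzero \<longrightarrow> S = {})"

definition subspace_dim :: "nat \<Rightarrow> nat \<Rightarrow> (nat \<Rightarrow> bool) set \<Rightarrow> bool" where
  "subspace_dim N k C \<longleftrightarrow>
     C \<subseteq> vecs N \<and> vzero \<in> C \<and> (\<forall>x\<in>C. \<forall>y\<in>C. vadd x y \<in> C) \<and>
     (\<exists>B. finite B \<and> B \<subseteq> C \<and> z2_indep B \<and> z2_span B = C \<and> card B = k)"

text \<open>Doubly even (N,k) code (doubly even codes are self-orthogonal).\<close>
definition doubly_even_code :: "nat \<Rightarrow> nat \<Rightarrow> (nat \<Rightarrow> bool) set \<Rightarrow> bool" where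
  "doubly_even_code N k C \<longleftrightarrow>
     subspace_dim N k C \<and> (\<forall>c\<in>C. weight N c mod 4 = 0) \<and>
     (\<forall>u\<in>C. \<forall>v\<in>C. ip N u v = 0)"

definition standard_form_gen :: "nat \<Rightarrow> nat \<Rightarrow> (nat \<Rightarrow> bool) set \<Rightarrow> (nat \<Rightarrow> bool) list \<Rightarrow> bool" where
  "standard_form_gen N k C D \<longleftrightarrow>
     length D = k \<and> distinct D \<and> set D \<subseteq> C \<and> z2_indep (set D) \<and> z2_span (set D) = C \<and>
     (\<exists>J. length J = k \<and> distinct J \<and> set J \<subseteq> {1..N} \<and>
          (\<forall>a<k. \<forall>b<k. (D ! a) (J ! b) = (a = b)))"

definition adj_rel :: "'v set set \<Rightarrow> ('v \<times> 'v) set" where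
  "adj_rel E = {(u,v). {u,v} \<in> E}"

definition is_adinkra ::
  "nat \<Rightarrow> 'v set \<Rightarrow> 'v set set \<Rightarrow> ('v set \<Rightarrow> nat) \<Rightarrow> ('v set \<Rightarrow> bool)
     \<Rightarrow> ('v \<Rightarrow> bool) \<Rightarrow> ('v \<Rightarrow> int) \<Rightarrow> bool" where
  "is_adinkra N V E col par boson hgt \<longleftrightarrow>
     finite V \<and> V \<noteq> {} \<and>
     E \<subseteq> {{u,v} | u v. u \<in> V \<and> v \<in> V \<and> u \<noteq> v} \<and>
     (\<forall>u\<in>V. \<forall>v\<in>V. (u,v) \<in> (adj_rel E)\<^sup>*) \<and>
     (\<forall>u v. {u,v} \<in> E \<longrightarrow> boson u \<noteq> boson v) \<and>
     (\<forall>u v. {u,v} \<in> E \<longrightarrow> \<bar>hgt u - hgt v\<bar> = 1) \<and>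
     (\<forall>e\<in>E. col e \<in> {1..N}) \<and>
     (\<forall>v\<in>V. \<forall>i\<in>{1..N}. \<exists>!e. e \<in> E \<and> v \<in> e \<and> col e = i) \<and>
     (\<forall>u v w i j. {u,v} \<in> E \<and> {v,w} \<in> E \<and> col {u,v} = i \<and> col {v,w} = j \<and> i \<noteq> j \<longrightarrow>
        (\<exists>!x. {w,x} \<in> E \<and> col {w,x} = i \<and> {x,u} \<in> E \<and> col {x,u} = j) \<and>
        (\<forall>x. {w,x} \<in> E \<and> col {w,x} = i \<and> {x,u} \<in> E \<and> col {x,u} = j \<longrightarrow>
             odd (card {e \<in> {{u,v},{v,w},{w,x},{x,u}}. par e})))"

text \<open>Automorphism disregarding vertex coloring: a permutation of V preserving
  adjacency and edge colors which is parity-preserving after switching a set S of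
  vertices (switching S reverses the parity of every edge once for each endpoint in S).\<close>
definition aut_disregarding_coloring ::
  "'v set \<Rightarrow> 'v set set \<Rightarrow> ('v set \<Rightarrow> nat) \<Rightarrow> ('v set \<Rightarrow> bool) \<Rightarrow> ('v \<Rightarrow> 'v) \<Rightarrow> bool" where
  "aut_disregarding_coloring V E col par \<sigma> \<longleftrightarrow>
     bij_betw \<sigma> V V \<and>
     (\<forall>u\<in>V. \<forall>v\<in>V. {\<sigma> u, \<sigma> v} \<in> E \<longleftrightarrow> {u,v} \<in> E) \<and>
     (\<forall>e\<in>E. col (\<sigma> ` e) = col e) \<and>
     (\<exists>S\<subseteq>V. \<forall>e\<in>E. (par (\<sigma> ` e) \<noteq> odd (card (\<sigma> ` e \<inter> S))) = par e)"

definition cube_E :: "nat \<Rightarrow> (nat \<Rightarrow> bool) set set" where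
  "cube_E N = {{x, vadd x (unitv i)} | x i. x \<in> vecs N \<and> i \<in> {1..N}}"

definition cube_col :: "nat \<Rightarrow> (nat \<Rightarrow> bool) set \<Rightarrow> nat" where
  "cube_col N e = (THE i. i \<in> {1..N} \<and> (\<exists>x. e = {x, vadd x (unitv i)}))"

definition coset :: "(nat \<Rightarrow> bool) set \<Rightarrow> (nat \<Rightarrow> bool) \<Rightarrow> (nat \<Rightarrow> bool) set" where
  "coset C x = (\<lambda>c. vadd x c) ` C"

definition quot_V :: "nat \<Rightarrow> (nat \<Rightarrow> bool) set \<Rightarrow> (nat \<Rightarrow> bool) set set" where
  "quot_V N C = coset C ` vecs N"

definition quot_E :: "nat \<Rightarrow> (nat \<Rightarrow> bool) set \<Rightarrow> (nat \<Rightarrow> bool) set set set" where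
  "quot_E N C = {{coset C x, coset C (vadd x (unitv i))} | x i. x \<in> vecs N \<and> i \<in> {1..N}}"

definition quot_col :: "nat \<Rightarrow> (nat \<Rightarrow> bool) set \<Rightarrow> (nat \<Rightarrow> bool) set set \<Rightarrow> nat" where
  "quot_col N C e = (THE i. i \<in> {1..N} \<and>
      (\<exists>x\<in>vecs N. e = {coset C x, coset C (vadd x (unitv i))}))"

definition quot_par :: "nat \<Rightarrow> (nat \<Rightarrow> bool) set \<Rightarrow> ((nat \<Rightarrow> bool) set \<Rightarrow> bool)
    \<Rightarrow> (nat \<Rightarrow> bool) set set \<Rightarrow> bool" where
  "quot_par N C par e = par (SOME f. f \<in> cube_E N \<and>
      (\<exists>x y. f = {x, y} \<and> e = {coset C x, coset C y}))"

definition parity_compatible :: "nat \<Rightarrow> (nat \<Rightarrow> bool) set \<Rightarrow> ((nat \<Rightarrow> bool) set \<Rightarrow> bool) \<Rightarrow> bool" where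
  "parity_compatible N C par \<longleftrightarrow>
     (\<forall>x\<in>vecs N. \<forall>i\<in>{1..N}. \<forall>c\<in>C.
        par {x, vadd x (unitv i)} = par {vadd x c, vadd (vadd x c) (unitv i)})"

end

theory Submission
  imports Defs
begin

text \<open>
  Colors are preserved, so an automorphism sending \<open>x + C\<close> to \<open>y + C\<close> follows the colored
  paths out of \<open>x + C\<close> and must be the translation by \<open>a = x + y\<close>. By the 4-cycle condition,
  the edge parity of the cube differs from the standard parity \<open>std_par\<close> by a cocycle of the
  (simply connected) cube, i.e. by the coboundary of a vertex switching \<open>s\<close>. Hence translation
  by \<open>a\<close> preserves parities on the cube after switching the vertices \<open>z\<close> with
  \<open>\<beta>(z, a) + s(z + a) + s(z) = 1\<close>, where \<open>\<beta>(z, a)\<close> is the sum of \<open>z\<^sub>i a\<^sub>j\<close> over \<open>j < i\<close>.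
  This switching set is a union of cosets, and so descends to the quotient, exactly when
  \<open>\<langle>a, c\<rangle> = 0\<close> for all \<open>c \<in> C\<close>: moving \<open>z\<close> by \<open>c\<close> changes it by \<open>\<langle>a, c\<rangle>\<close>, because the
  parities are compatible with \<open>C\<close> and \<open>\<beta>(a, c) + \<beta>(c, a) + \<langle>a, c\<rangle> = |a| |c|\<close> is even. Any
  other admissible switching set differs from this one by a constant, which gives the converse.
\<close>

section \<open>Vectors over \<open>\<int>\<^sub>2\<close>\<close>

notation vadd (infixl "\<oplus>" 65)

lemma vadd_comm: "x \<oplus> y = y \<oplus> x"
  by (auto simp: vadd_def)

lemma vadd_assoc: "x \<oplus> y \<oplus> z = x \<oplus> (y \<oplus> z)"
  by (auto simp: vadd_def)

lemma vadd_left_comm: "x \<oplus> (y \<oplus> z) = y \<oplus> (x \<oplus> z)"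
  by (auto simp: vadd_def)

lemmas vadd_ac = vadd_assoc vadd_comm vadd_left_comm

lemma vadd_self [simp]: "x \<oplus> x = vzero"
  by (simp add: vadd_def vzero_def)

lemma vadd_vzero [simp]: "x \<oplus> vzero = x" "vzero \<oplus> x = x"
  by (simp_all add: vadd_def vzero_def)

lemma vadd_cancel [simp]: "x \<oplus> (x \<oplus> y) = y" "y \<oplus> x \<oplus> x = y"
  by (auto simp: vadd_def)

lemma vadd_in_vecs [simp]: "x \<in> vecs N \<Longrightarrow> y \<in> vecs N \<Longrightarrow> x \<oplus> y \<in> vecs N"
  by (auto simp: vecs_def vadd_def)

lemma unitv_in_vecs [simp]: "i \<in> {1..N} \<Longrightarrow> unitv i \<in> vecs N"
  by (auto simp: vecs_def unitv_def)

lemma vzero_in_vecs [simp]: "vzero \<in> vecs N"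
  by (simp add: vecs_def vzero_def)

lemma vecs_Suc: "x \<in> vecs N \<Longrightarrow> x \<in> vecs (Suc N)"
  by (auto simp: vecs_def)

lemma vadd_left_cancel [simp]: "x \<oplus> a = x \<oplus> b \<longleftrightarrow> a = b"
  by (metis vadd_cancel(1))

lemma vadd_eq_vzero_iff [simp]: "x \<oplus> y = vzero \<longleftrightarrow> x = y"
  by (metis vadd_cancel(1) vadd_self vadd_vzero(1))

lemma vadd_eq_self_iff [simp]: "x \<oplus> a = x \<longleftrightarrow> a = vzero" "x = x \<oplus> a \<longleftrightarrow> a = vzero"
  by (metis vadd_left_cancel vadd_vzero(1))+

lemma unitv_neq_vzero [simp]: "unitv i \<noteq> vzero"
  by (auto simp: unitv_def vzero_def fun_eq_iff)

lemma unitv_eq_iff [simp]: "unitv i = unitv j \<longleftrightarrow> i = j"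
  by (auto simp: unitv_def fun_eq_iff)

lemma odd_card_filter_xor:
  assumes "finite A"
  shows "odd (card {t\<in>A. P t \<noteq> Q t}) \<longleftrightarrow> odd (card {t\<in>A. P t}) \<noteq> odd (card {t\<in>A. Q t})"
proof -
  have split: "card {t\<in>A. R t} = card {t\<in>A. R t \<and> \<not> R' t} + card {t\<in>A. R t \<and> R' t}" for R R'
    using assms by (subst card_Un_disjoint[symmetric]) (auto intro: arg_cong[where f = card])
  have "card {t\<in>A. P t \<noteq> Q t} = card {t\<in>A. P t \<and> \<not> Q t} + card {t\<in>A. Q t \<and> \<not> P t}"
    using assms by (subst card_Un_disjoint[symmetric]) (auto intro: arg_cong[where f = card])
  then show ?thesis
    using split[of P Q] split[of Q P] by (simp add: conj_commute) argo
qed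

lemma ip_comm: "ip N u v = ip N v u"
  by (simp add: ip_def conj_commute)

lemma even_ip_vadd_right: "even (ip N a (x \<oplus> y)) \<longleftrightarrow> even (ip N a x) = even (ip N a y)"
proof -
  have filter: "{i\<in>{1..N}. a i \<and> R i} = {i\<in>{i\<in>{1..N}. a i}. R i}" for R
    by auto
  have "odd (card {i\<in>{i\<in>{1..N}. a i}. x i \<noteq> y i})
      \<longleftrightarrow> odd (card {i\<in>{i\<in>{1..N}. a i}. x i}) \<noteq> odd (card {i\<in>{i\<in>{1..N}. a i}. y i})"
    by (rule odd_card_filter_xor) simp
  then show ?thesis
    unfolding ip_def vadd_def filter by simp argo
qed

lemma ip_eq_iff_even_ip_vadd: "ip N x c = ip N y c \<longleftrightarrow> even (ip N (x \<oplus> y) c)"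
proof -
  have "ip N u c = ip N v c \<longleftrightarrow> even (ip N u c) = even (ip N v c)" for u v
    by (auto simp: ip_def mod2_eq_if)
  then show ?thesis
    using even_ip_vadd_right[of N c x y] by (simp add: ip_comm[of N _ c])
qed

lemma vsum_insert: "finite S \<Longrightarrow> v \<notin> S \<Longrightarrow> vsum (insert v S) = v \<oplus> vsum S"
proof
  fix i
  assume "finite S" and "v \<notin> S"
  moreover have "{w\<in>insert v S. w i} = (if v i then insert v {w\<in>S. w i} else {w\<in>S. w i})"
    by auto
  ultimately show "vsum (insert v S) i = (v \<oplus> vsum S) i"
    by (simp add: vsum_def vadd_def)
qed

lemma even_ip_vsum:
  assumes "finite S" and "\<forall>v\<in>S. even (ip N a v)"
  shows "even (ip N a (vsum S))"
  using assms
proof (induction S rule: finite_induct)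
  case empty
  then show ?case by (simp add: ip_def vsum_def)
next
  case (insert v S)
  then show ?case by (simp add: vsum_insert even_ip_vadd_right)
qed

lemma even_ip_span:
  assumes "finite B" and "\<forall>v\<in>B. even (ip N a v)" and "c \<in> z2_span B"
  shows "even (ip N a c)"
proof -
  obtain S where S: "S \<subseteq> B" "c = vsum S"
    using assms(3) by (auto simp: z2_span_def)
  have "finite S"
    using S(1) assms(1) finite_subset by blast
  then show ?thesis
    unfolding S(2) using S(1) assms(2) by (intro even_ip_vsum) auto
qed

section \<open>Edge parities of the cube\<close>

lemma vecs_unitv_induct [consumes 2, case_names base step]:
  assumes "x0 \<in> vecs N" and "z \<in> vecs N"
    and base: "P x0"
    and step: "\<And>z i. z \<in> vecs N \<Longrightarrow> i \<in> {1..N} \<Longrightarrow> P z \<Longrightarrow> P (z \<oplus> unitv i)"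
  shows "P z"
  using \<open>z \<in> vecs N\<close>
proof (induction "card {i\<in>{1..N}. z i \<noteq> x0 i}" arbitrary: z)
  case 0
  have "z i = x0 i" for i
  proof (cases "i \<in> {1..N}")
    case True
    then show ?thesis
      using "0.hyps" by auto
  next
    case False
    then show ?thesis
      using "0.prems" \<open>x0 \<in> vecs N\<close> by (auto simp: vecs_def)
  qed
  then show ?case
    using base by (simp add: fun_eq_iff)
next
  case (Suc n)
  have "{i\<in>{1..N}. z i \<noteq> x0 i} \<noteq> {}"
    using Suc.hyps(2) by (metis card.empty nat.simps(3))
  then obtain i where i: "i \<in> {1..N}" "z i \<noteq> x0 i"
    by blast
  have "{j\<in>{1..N}. (z \<oplus> unitv i) j \<noteq> x0 j} = {j\<in>{1..N}. z j \<noteq> x0 j} - {i}"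
    using i by (auto simp: vadd_def unitv_def)
  then have "P (z \<oplus> unitv i)"
    using Suc i by (intro Suc.hyps(1)) simp_all
  then show ?case
    using step[of "z \<oplus> unitv i" i] Suc.prems i(1) by simp
qed

lemma vecs_unitv_invariant_const:
  assumes "x0 \<in> vecs N" and "z \<in> vecs N"
    and "\<And>z i. z \<in> vecs N \<Longrightarrow> i \<in> {1..N} \<Longrightarrow> f (z \<oplus> unitv i) = f z"
  shows "f z = f x0"
  using assms(1,2) by (induction rule: vecs_unitv_induct) (use assms(3) in auto)

definition edge_par :: "((nat \<Rightarrow> bool) set \<Rightarrow> bool) \<Rightarrow> (nat \<Rightarrow> bool) \<Rightarrow> nat \<Rightarrow> bool" where
  "edge_par par x i = par {x, x \<oplus> unitv i}"

lemma edge_par_flip [simp]: "edge_par par (x \<oplus> unitv i) i = edge_par par x i"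
  by (simp add: edge_par_def insert_commute)

lemma cube_edge_in_cube_E: "x \<in> vecs N \<Longrightarrow> i \<in> {1..N} \<Longrightarrow> {x, x \<oplus> unitv i} \<in> cube_E N"
  by (auto simp: cube_E_def)

lemma cube_edge_eq_imp_eq:
  assumes "{x, x \<oplus> unitv i} = {z, z \<oplus> unitv j}"
  shows "i = j"
proof -
  have "x = z \<and> x \<oplus> unitv i = z \<oplus> unitv j \<or> x = z \<oplus> unitv j \<and> x \<oplus> unitv i = z"
    using assms by (simp add: doubleton_eq_iff)
  then have "unitv i = unitv j"
    by (auto simp: vadd_def fun_eq_iff)
  then show ?thesis by simp
qed

lemma cube_col_edge: "i \<in> {1..N} \<Longrightarrow> cube_col N {x, x \<oplus> unitv i} = i"
  unfolding cube_col_def by (rule the_equality) (auto dest: cube_edge_eq_imp_eq)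

lemma odd_card_filter_4:
  assumes "distinct [a, b, c, d]"
  shows "odd (card {t \<in> {a, b, c, d}. P t}) \<longleftrightarrow> P a \<noteq> (P b \<noteq> (P c \<noteq> P d))"
proof -
  have filter_insert: "{t \<in> insert e B. P t} = (if P e then insert e {t \<in> B. P t} else {t \<in> B. P t})" for e B
    by auto
  show ?thesis
    unfolding filter_insert using assms by (cases "P a"; cases "P b"; cases "P c"; cases "P d") simp_all
qed

lemma adinkra_square_odd:
  assumes "is_adinkra N V E col par boson hgt"
    and "{u, v} \<in> E" "{v, w} \<in> E" "{w, x} \<in> E" "{x, u} \<in> E"
    and "col {u, v} = i" "col {v, w} = j" "col {w, x} = i" "col {x, u} = j" "i \<noteq> j"
  shows "odd (card {e \<in> {{u, v}, {v, w}, {w, x}, {x, u}}. par e})"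
proof -
  have "\<forall>u v w i j. {u,v} \<in> E \<and> {v,w} \<in> E \<and> col {u,v} = i \<and> col {v,w} = j \<and> i \<noteq> j \<longrightarrow>
        (\<forall>x. {w,x} \<in> E \<and> col {w,x} = i \<and> {x,u} \<in> E \<and> col {x,u} = j \<longrightarrow>
             odd (card {e \<in> {{u,v},{v,w},{w,x},{x,u}}. par e}))"
    using assms(1) unfolding is_adinkra_def by (elim conjE) (intro allI impI, simp)
  then show ?thesis
    using assms(2-) by blast
qed

lemma cube_edge_par_square:
  assumes cube: "is_adinkra N (vecs N) (cube_E N) (cube_col N) par boson hgt"
    and x: "x \<in> vecs N" and i: "i \<in> {1..N}" and j: "j \<in> {1..N}" and "i \<noteq> j"
  shows "edge_par par x i \<noteq> (edge_par par (x \<oplus> unitv i) j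
           \<noteq> (edge_par par (x \<oplus> unitv j) i \<noteq> edge_par par x j))"
proof -
  define v w u where "v = x \<oplus> unitv i" and "w = x \<oplus> unitv i \<oplus> unitv j" and "u = x \<oplus> unitv j"
  have w: "w = v \<oplus> unitv j" "w = u \<oplus> unitv i" and x_eq: "x = u \<oplus> unitv j"
    by (simp_all add: v_def w_def u_def vadd_ac)
  have vecs: "v \<in> vecs N" "u \<in> vecs N"
    using x i j by (simp_all add: v_def u_def)
  have edges: "{x, v} \<in> cube_E N" "{v, w} \<in> cube_E N" "{w, u} \<in> cube_E N" "{u, x} \<in> cube_E N"
    using cube_edge_in_cube_E[OF x i] cube_edge_in_cube_E[OF vecs(1) j]
      cube_edge_in_cube_E[OF vecs(2) i] cube_edge_in_cube_E[OF vecs(2) j]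
    unfolding v_def[symmetric] w(1)[symmetric] w(2)[symmetric] x_eq[symmetric]
    by (simp_all add: insert_commute)
  have cols: "cube_col N {x, v} = i" "cube_col N {v, w} = j" "cube_col N {w, u} = i" "cube_col N {u, x} = j"
    using cube_col_edge[OF i, of x] cube_col_edge[OF j, of v] cube_col_edge[OF i, of u] cube_col_edge[OF j, of u]
    unfolding v_def[symmetric] w(1)[symmetric] w(2)[symmetric] x_eq[symmetric]
    by (simp_all add: insert_commute)
  have distinct: "distinct [{x, v}, {v, w}, {w, u}, {u, x}]"
    using \<open>i \<noteq> j\<close> by (simp add: v_def w_def u_def doubleton_eq_iff vadd_assoc)
  have "par {x, v} \<noteq> (par {v, w} \<noteq> (par {w, u} \<noteq> par {u, x}))"
    using adinkra_square_odd[OF cube edges cols(1,2,3,4) \<open>i \<noteq> j\<close>]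
    unfolding odd_card_filter_4[OF distinct] .
  then show ?thesis
    unfolding edge_par_def v_def[symmetric] u_def[symmetric] w(1)[symmetric] w(2)[symmetric] x_eq[symmetric]
    by (simp add: insert_commute)
qed

lemma vecs_fun_upd_Suc: "x \<in> vecs (Suc N) \<Longrightarrow> x(Suc N := False) \<in> vecs N"
  by (auto simp: vecs_def le_Suc_eq)

lemma cube_coboundary_extend:
  fixes N :: nat and d :: "(nat \<Rightarrow> bool) \<Rightarrow> nat \<Rightarrow> bool" and h0 :: "(nat \<Rightarrow> bool) \<Rightarrow> bool"
  defines "M \<equiv> Suc N"
  assumes sym: "\<And>x. x \<in> vecs M \<Longrightarrow> d (x \<oplus> unitv M) M = d x M"
    and square: "\<And>x i. x \<in> vecs M \<Longrightarrow> i \<in> {1..N} \<Longrightarrow>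
        (d x i \<noteq> d (x \<oplus> unitv i) M) = (d (x \<oplus> unitv M) i \<noteq> d x M)"
    and h0: "\<And>x i. x \<in> vecs N \<Longrightarrow> i \<in> {1..N} \<Longrightarrow> d x i = (h0 x \<noteq> h0 (x \<oplus> unitv i))"
  shows "\<exists>h :: (nat \<Rightarrow> bool) \<Rightarrow> bool. \<forall>x\<in>vecs M. \<forall>i\<in>{1..M}. d x i = (h x \<noteq> h (x \<oplus> unitv i))"
proof -
  \<comment> \<open>Extend \<open>h0\<close> from the face \<open>x\<^sub>M = 0\<close> along the edges of direction \<open>M\<close>.\<close>
  define h where "h x = (h0 (x(M := False)) \<noteq> (x M \<and> d (x(M := False)) M))" for x
  have "d x i = (h x \<noteq> h (x \<oplus> unitv i))" if x: "x \<in> vecs M" and i: "i \<in> {1..M}" for x i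
  proof -
    define x' where "x' = x(M := False)"
    have x': "x' \<in> vecs N" "x' \<in> vecs M"
      using x vecs_fun_upd_Suc vecs_Suc by (simp_all add: x'_def M_def)
    have x_true: "x = x' \<oplus> unitv M" if "x M"
      using that by (auto simp: x'_def vadd_def unitv_def fun_eq_iff)
    have x_false: "x = x'" if "\<not> x M"
      using that by (auto simp: x'_def fun_eq_iff)
    show ?thesis
    proof (cases "i = M")
      case True
      have "(x \<oplus> unitv i)(M := False) = x'" "(x \<oplus> unitv i) M = (\<not> x M)"
        using True by (auto simp: x'_def vadd_def unitv_def fun_eq_iff)
      moreover have "d x M = d x' M"
        using x_true x_false sym[OF x'(2)] by (cases "x M") simp_all
      ultimately show ?thesis
        using True by (auto simp: h_def x'_def[symmetric])
    next
      case False
      then have iN: "i \<in> {1..N}"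
        using i by (auto simp: M_def)
      have "(x \<oplus> unitv i)(M := False) = x' \<oplus> unitv i" "(x \<oplus> unitv i) M = x M"
        using False by (auto simp: x'_def vadd_def unitv_def fun_eq_iff)
      then have "(h x \<noteq> h (x \<oplus> unitv i))
          = (d x' i \<noteq> (x M \<and> (d x' M \<noteq> d (x' \<oplus> unitv i) M)))"
        using h0[OF x'(1) iN] by (auto simp: h_def x'_def[symmetric])
      also have "\<dots> = d x i"
        using x_true x_false square[OF x'(2) iN] by (cases "x M") (simp_all, argo)
      finally show ?thesis ..
    qed
  qed
  then show ?thesis
    by blast
qed

lemma cube_cocycle_coboundary:
  fixes d :: "(nat \<Rightarrow> bool) \<Rightarrow> nat \<Rightarrow> bool"
  assumes "\<And>x i. x \<in> vecs N \<Longrightarrow> i \<in> {1..N} \<Longrightarrow> d (x \<oplus> unitv i) i = d x i"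
    and "\<And>x i j. x \<in> vecs N \<Longrightarrow> i \<in> {1..N} \<Longrightarrow> j \<in> {1..N} \<Longrightarrow> i \<noteq> j \<Longrightarrow>
        (d x i \<noteq> d (x \<oplus> unitv i) j) = (d (x \<oplus> unitv j) i \<noteq> d x j)"
  shows "\<exists>h :: (nat \<Rightarrow> bool) \<Rightarrow> bool. \<forall>x\<in>vecs N. \<forall>i\<in>{1..N}. d x i = (h x \<noteq> h (x \<oplus> unitv i))"
  using assms
proof (induction N)
  case 0
  then show ?case by simp
next
  case (Suc N)
  have "\<exists>h0 :: (nat \<Rightarrow> bool) \<Rightarrow> bool. \<forall>x\<in>vecs N. \<forall>i\<in>{1..N}. d x i = (h0 x \<noteq> h0 (x \<oplus> unitv i))"
  proof (rule Suc.IH)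
    fix x i
    assume "x \<in> vecs N" and "i \<in> {1..N}"
    then show "d (x \<oplus> unitv i) i = d x i"
      by (intro Suc.prems(1) vecs_Suc) auto
  next
    fix x i j
    assume "x \<in> vecs N" and "i \<in> {1..N}" and "j \<in> {1..N}" and "i \<noteq> j"
    then show "(d x i \<noteq> d (x \<oplus> unitv i) j) = (d (x \<oplus> unitv j) i \<noteq> d x j)"
      by (intro Suc.prems(2) vecs_Suc) auto
  qed
  then obtain h0 :: "(nat \<Rightarrow> bool) \<Rightarrow> bool"
    where h0: "\<And>x i. x \<in> vecs N \<Longrightarrow> i \<in> {1..N} \<Longrightarrow> d x i = (h0 x \<noteq> h0 (x \<oplus> unitv i))"
    by blast
  show ?case
  proof (rule cube_coboundary_extend)
    fix x
    assume "x \<in> vecs (Suc N)"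
    then show "d (x \<oplus> unitv (Suc N)) (Suc N) = d x (Suc N)"
      by (rule Suc.prems(1)) simp
  next
    fix x i
    assume "x \<in> vecs (Suc N)" and "i \<in> {1..N}"
    then show "(d x i \<noteq> d (x \<oplus> unitv i) (Suc N)) = (d (x \<oplus> unitv (Suc N)) i \<noteq> d x (Suc N))"
      by (intro Suc.prems(2)) auto
  next
    fix x i
    assume "x \<in> vecs N" and "i \<in> {1..N}"
    then show "d x i = (h0 x \<noteq> h0 (x \<oplus> unitv i))"
      by (rule h0)
  qed
qed

section \<open>The standard parity and vertex switchings\<close>

definition std_par :: "nat \<Rightarrow> (nat \<Rightarrow> bool) \<Rightarrow> nat \<Rightarrow> bool" where
  "std_par N x i = odd (card {j\<in>{1..N}. j < i \<and> x j})"

lemma std_par_vadd: "std_par N (x \<oplus> y) i \<longleftrightarrow> std_par N x i \<noteq> std_par N y i"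
proof -
  have filter: "{j\<in>{1..N}. j < i \<and> R j} = {j\<in>{j\<in>{1..N}. j < i}. R j}" for R
    by auto
  show ?thesis
    unfolding std_par_def vadd_def filter by (rule odd_card_filter_xor) simp
qed

lemma std_par_unitv: "i \<in> {1..N} \<Longrightarrow> std_par N (unitv i) j \<longleftrightarrow> i < j"
proof -
  assume "i \<in> {1..N}"
  then have "{l\<in>{1..N}. l < j \<and> unitv i l} = (if i < j then {i} else {})"
    by (auto simp: unitv_def)
  then show ?thesis
    by (simp add: std_par_def)
qed

lemma std_par_flip [simp]: "std_par N (x \<oplus> unitv i) i = std_par N x i"
proof -
  have "{j\<in>{1..N}. j < i \<and> (x \<oplus> unitv i) j} = {j\<in>{1..N}. j < i \<and> x j}"
    by (auto simp: vadd_def unitv_def)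
  then show ?thesis
    by (simp add: std_par_def)
qed

lemma std_par_square:
  assumes "i \<in> {1..N}" and "j \<in> {1..N}" and "i \<noteq> j"
  shows "std_par N x i \<noteq> (std_par N (x \<oplus> unitv i) j \<noteq> (std_par N (x \<oplus> unitv j) i \<noteq> std_par N x j))"
  using assms by (auto simp: std_par_vadd std_par_unitv)

definition lower_form :: "nat \<Rightarrow> (nat \<Rightarrow> bool) \<Rightarrow> (nat \<Rightarrow> bool) \<Rightarrow> bool" where
  "lower_form N x a = odd (card {t\<in>{1..N} \<times> {1..N}. snd t < fst t \<and> x (fst t) \<and> a (snd t)})"

lemma lower_form_vadd_left:
  "lower_form N (x \<oplus> y) a \<longleftrightarrow> lower_form N x a \<noteq> lower_form N y a"
proof -
  define A where "A = {t\<in>{1..N} \<times> {1..N}. snd t < fst t \<and> a (snd t)}"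
  have filter: "{t\<in>{1..N} \<times> {1..N}. snd t < fst t \<and> R (fst t) \<and> a (snd t)} = {t\<in>A. R (fst t)}" for R
    by (auto simp: A_def)
  have "odd (card {t\<in>A. x (fst t) \<noteq> y (fst t)})
      \<longleftrightarrow> odd (card {t\<in>A. x (fst t)}) \<noteq> odd (card {t\<in>A. y (fst t)})"
    by (rule odd_card_filter_xor) (simp add: A_def)
  then show ?thesis
    unfolding lower_form_def vadd_def filter[of "\<lambda>s. x s \<noteq> y s"] filter[of x] filter[of y] .
qed

lemma lower_form_vzero [simp]: "\<not> lower_form N vzero a"
  by (simp add: lower_form_def vzero_def)

lemma lower_form_unitv: "i \<in> {1..N} \<Longrightarrow> lower_form N (unitv i) a = std_par N a i"
proof -
  assume "i \<in> {1..N}"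
  then have "{t\<in>{1..N} \<times> {1..N}. snd t < fst t \<and> unitv i (fst t) \<and> a (snd t)}
      = Pair i ` {j\<in>{1..N}. j < i \<and> a j}"
    by (auto simp: unitv_def)
  then show ?thesis
    by (simp add: lower_form_def std_par_def card_image inj_on_def)
qed

lemma lower_form_vadd_unitv:
  "i \<in> {1..N} \<Longrightarrow> lower_form N (x \<oplus> unitv i) a \<longleftrightarrow> lower_form N x a \<noteq> std_par N a i"
  by (simp add: lower_form_vadd_left lower_form_unitv)

text \<open>The pairs \<open>(i, j)\<close> with \<open>c\<^sub>i = a\<^sub>j = 1\<close> split into those below, above and on the
  diagonal, and there are \<open>|c| |a|\<close> of them.\<close>
lemma lower_form_swap:
  assumes "even (card {i\<in>{1..N}. c i})"
  shows "lower_form N c a \<noteq> lower_form N a c \<longleftrightarrow> odd (ip N a c)"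
proof -
  define X where "X = {t\<in>{1..N} \<times> {1..N}. c (fst t) \<and> a (snd t)}"
  define below above diag where "below = {t\<in>X. snd t < fst t}"
    and "above = {t\<in>X. fst t < snd t}" and "diag = {t\<in>X. fst t = snd t}"
  have "X = {i\<in>{1..N}. c i} \<times> {j\<in>{1..N}. a j}"
    by (auto simp: X_def)
  then have "even (card X)"
    using assms by (simp add: card_cartesian_product)
  moreover have "card X = card below + card above + card diag"
  proof -
    have "finite X"
      by (simp add: X_def)
    have "X = below \<union> (above \<union> diag)"
      by (auto simp: below_def above_def diag_def)
    moreover have "card (above \<union> diag) = card above + card diag"
      by (rule card_Un_disjoint) (use \<open>finite X\<close> in \<open>auto simp: above_def diag_def\<close>)
    moreover have "card (below \<union> (above \<union> diag)) = card below + card (above \<union> diag)"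
      by (rule card_Un_disjoint) (use \<open>finite X\<close> in \<open>auto simp: below_def above_def diag_def\<close>)
    ultimately show ?thesis
      by simp
  qed
  moreover have "card below = card {t\<in>{1..N} \<times> {1..N}. snd t < fst t \<and> c (fst t) \<and> a (snd t)}"
    by (rule arg_cong[where f = card]) (auto simp: below_def X_def)
  moreover have "card above = card {t\<in>{1..N} \<times> {1..N}. snd t < fst t \<and> a (fst t) \<and> c (snd t)}"
  proof -
    have "{t\<in>{1..N} \<times> {1..N}. snd t < fst t \<and> a (fst t) \<and> c (snd t)} = prod.swap ` above"
      by (auto simp: above_def X_def image_iff)
    then show ?thesis
      by (simp add: card_image)
  qed
  moreover have "card diag = card {i\<in>{1..N}. a i \<and> c i}"
  proof -
    have "diag = (\<lambda>i. (i, i)) ` {i\<in>{1..N}. a i \<and> c i}"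
      by (auto simp: diag_def X_def)
    then show ?thesis
      by (simp add: card_image inj_on_def)
  qed
  ultimately show ?thesis
    by (auto simp: lower_form_def ip_def)
qed

lemma cube_switching_exists:
  assumes cube: "is_adinkra N (vecs N) (cube_E N) (cube_col N) par boson hgt"
  shows "\<exists>s :: (nat \<Rightarrow> bool) \<Rightarrow> bool. \<forall>x\<in>vecs N. \<forall>i\<in>{1..N}.
     (edge_par par x i \<noteq> std_par N x i) = (s x \<noteq> s (x \<oplus> unitv i))"
proof (rule cube_cocycle_coboundary[where d = "\<lambda>x i. edge_par par x i \<noteq> std_par N x i"])
  fix x i j
  assume "x \<in> vecs N" "i \<in> {1..N}" "j \<in> {1..N}" "i \<noteq> j"
  with cube_edge_par_square[OF cube this] std_par_square[OF this(2-4), of x]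
  show "((edge_par par x i \<noteq> std_par N x i) \<noteq> (edge_par par (x \<oplus> unitv i) j \<noteq> std_par N (x \<oplus> unitv i) j))
      = ((edge_par par (x \<oplus> unitv j) i \<noteq> std_par N (x \<oplus> unitv j) i) \<noteq> (edge_par par x j \<noteq> std_par N x j))"
    by argo
qed simp

section \<open>The quotient by a doubly even code\<close>

lemma odd_card_doubleton_inter:
  "A \<noteq> B \<Longrightarrow> odd (card ({A, B} \<inter> S)) \<longleftrightarrow> (A \<in> S) \<noteq> (B \<in> S)"
  by (cases "A \<in> S"; cases "B \<in> S") (simp_all add: Int_insert_left)

lemma edge_in_quot_E:
  "z \<in> vecs N \<Longrightarrow> i \<in> {1..N} \<Longrightarrow> {coset C z, coset C (z \<oplus> unitv i)} \<in> quot_E N C"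
  unfolding quot_E_def by blast

lemma quot_E_elim:
  assumes "e \<in> quot_E N C"
  obtains z i where "z \<in> vecs N" and "i \<in> {1..N}" and "e = {coset C z, coset C (z \<oplus> unitv i)}"
  using assms unfolding quot_E_def by blast

lemma coset_in_quot_V: "z \<in> vecs N \<Longrightarrow> coset C z \<in> quot_V N C"
  unfolding quot_V_def by blast

lemma quot_V_elim:
  assumes "W \<in> quot_V N C"
  obtains z where "z \<in> vecs N" and "W = coset C z"
  using assms unfolding quot_V_def by blast

definition translate :: "(nat \<Rightarrow> bool) \<Rightarrow> (nat \<Rightarrow> bool) set \<Rightarrow> (nat \<Rightarrow> bool) set" where
  "translate a W = (\<lambda>v. v \<oplus> a) ` W"

lemma translate_coset: "translate a (coset C z) = coset C (z \<oplus> a)"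
  unfolding translate_def coset_def image_image by (rule image_cong) (simp_all add: vadd_ac)

lemma translate_translate [simp]: "translate a (translate a W) = W"
  by (simp add: translate_def image_image vadd_assoc)

lemma translate_quot_edge:
  "translate a ` {coset C z, coset C (z \<oplus> unitv i)} = {coset C (z \<oplus> a), coset C (z \<oplus> a \<oplus> unitv i)}"
  by (simp add: translate_coset vadd_ac)

locale doubly_even =
  fixes N k :: nat and C :: "(nat \<Rightarrow> bool) set"
  assumes code: "doubly_even_code N k C"
begin

lemma code_subset_vecs: "C \<subseteq> vecs N"
  and vzero_in_code: "vzero \<in> C"
  and vadd_in_code: "c \<in> C \<Longrightarrow> d \<in> C \<Longrightarrow> c \<oplus> d \<in> C"
  using code by (simp_all add: doubly_even_code_def subspace_dim_def)

lemma even_weight_code: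
  assumes "c \<in> C"
  shows "even (card {i\<in>{1..N}. c i})"
proof -
  have "card {i\<in>{1..N}. c i} mod 4 = 0"
    using code assms by (simp add: doubly_even_code_def weight_def)
  then show ?thesis
    by presburger
qed

lemma unitv_notin_code: "i \<in> {1..N} \<Longrightarrow> unitv i \<notin> C"
proof
  assume "i \<in> {1..N}" and "unitv i \<in> C"
  moreover have "{j\<in>{1..N}. unitv i j} = {i}"
    using \<open>i \<in> {1..N}\<close> by (auto simp: unitv_def)
  ultimately show False
    using even_weight_code by fastforce
qed

lemma unitv_vadd_unitv_notin_code:
  assumes "i \<in> {1..N}" and "j \<in> {1..N}" and "i \<noteq> j"
  shows "unitv i \<oplus> unitv j \<notin> C"
proof
  assume "unitv i \<oplus> unitv j \<in> C"
  then have "weight N (unitv i \<oplus> unitv j) mod 4 = 0"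
    using code by (simp add: doubly_even_code_def)
  moreover have "{l\<in>{1..N}. (unitv i \<oplus> unitv j) l} = {i, j}"
    using assms by (auto simp: unitv_def vadd_def)
  ultimately show False
    using assms(3) by (simp add: weight_def)
qed

lemma coset_eq_iff: "coset C u = coset C v \<longleftrightarrow> u \<oplus> v \<in> C"
proof
  assume "coset C u = coset C v"
  then have "u \<in> coset C v"
    using vzero_in_code by (metis coset_def image_eqI vadd_vzero(1))
  then show "u \<oplus> v \<in> C"
    by (auto simp: coset_def vadd_ac)
next
  assume uv: "u \<oplus> v \<in> C"
  have "coset C u \<subseteq> coset C v" if "u \<oplus> v \<in> C" for u v
  proof
    fix w
    assume "w \<in> coset C u"
    then obtain c where "c \<in> C" and "w = u \<oplus> c"
      by (auto simp: coset_def)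
    then have "w = v \<oplus> (u \<oplus> v \<oplus> c)" and "u \<oplus> v \<oplus> c \<in> C"
      using that vadd_in_code by (simp_all add: vadd_ac)
    then show "w \<in> coset C v"
      by (auto simp: coset_def)
  qed
  from this[OF uv] this[of v u] show "coset C u = coset C v"
    using uv by (simp add: vadd_comm)
qed

lemma coset_vadd_cong: "coset C u = coset C v \<Longrightarrow> coset C (u \<oplus> w) = coset C (v \<oplus> w)"
  by (simp add: coset_eq_iff vadd_ac)

lemma coset_neq_coset_vadd_unitv: "i \<in> {1..N} \<Longrightarrow> coset C z \<noteq> coset C (z \<oplus> unitv i)"
  using unitv_notin_code by (simp add: coset_eq_iff vadd_ac)

lemma quot_edge_eq_imp_eq:
  assumes i: "i \<in> {1..N}" and j: "j \<in> {1..N}"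
    and eq: "{coset C z, coset C (z \<oplus> unitv i)} = {coset C w, coset C (w \<oplus> unitv j)}"
  shows "i = j"
proof (rule ccontr)
  assume "i \<noteq> j"
  from eq consider "z \<oplus> w \<in> C" and "z \<oplus> unitv i \<oplus> (w \<oplus> unitv j) \<in> C"
    | "z \<oplus> (w \<oplus> unitv j) \<in> C" and "z \<oplus> unitv i \<oplus> w \<in> C"
    by (auto simp: doubleton_eq_iff coset_eq_iff)
  then have "unitv i \<oplus> unitv j \<in> C"
  proof cases
    case 1
    then have "z \<oplus> w \<oplus> (z \<oplus> unitv i \<oplus> (w \<oplus> unitv j)) \<in> C"
      by (rule vadd_in_code)
    then show ?thesis
      by (simp add: vadd_ac)
  next
    case 2
    then have "z \<oplus> (w \<oplus> unitv j) \<oplus> (z \<oplus> unitv i \<oplus> w) \<in> C"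
      by (rule vadd_in_code)
    then show ?thesis
      by (simp add: vadd_ac)
  qed
  with unitv_vadd_unitv_notin_code[OF i j \<open>i \<noteq> j\<close>] show False ..
qed

lemma quot_col_edge:
  assumes "i \<in> {1..N}" and "z \<in> vecs N"
  shows "quot_col N C {coset C z, coset C (z \<oplus> unitv i)} = i"
  unfolding quot_col_def
proof (rule the_equality)
  fix j
  assume "j \<in> {1..N} \<and> (\<exists>x\<in>vecs N. {coset C z, coset C (z \<oplus> unitv i)} = {coset C x, coset C (x \<oplus> unitv j)})"
  then show "j = i"
    using quot_edge_eq_imp_eq[OF assms(1)] by metis
qed (use assms in blast)

lemma quot_colored_neighbor:
  assumes "{coset C u, W} \<in> quot_E N C" and "quot_col N C {coset C u, W} = i"
  shows "W = coset C (u \<oplus> unitv i)"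
proof -
  obtain w j where w: "w \<in> vecs N" and j: "j \<in> {1..N}"
    and e: "{coset C u, W} = {coset C w, coset C (w \<oplus> unitv j)}"
    using assms(1) by (rule quot_E_elim)
  have "j = i"
    using assms(2) quot_col_edge[OF j w] by (simp add: e)
  from e consider "coset C u = coset C w" and "W = coset C (w \<oplus> unitv j)"
    | "coset C u = coset C (w \<oplus> unitv j)" and "W = coset C w"
    unfolding doubleton_eq_iff by blast
  then show ?thesis
  proof cases
    case 1
    then show ?thesis
      using coset_vadd_cong[of u w "unitv j"] \<open>j = i\<close> by simp
  next
    case 2
    then show ?thesis
      using coset_vadd_cong[of u "w \<oplus> unitv j" "unitv j"] \<open>j = i\<close> by simp
  qed
qed

lemma translate_in_quot_V: "a \<in> vecs N \<Longrightarrow> W \<in> quot_V N C \<Longrightarrow> translate a W \<in> quot_V N C"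
  by (auto elim!: quot_V_elim simp: translate_coset coset_in_quot_V)

lemma translate_quot_E:
  assumes a: "a \<in> vecs N" and "e \<in> quot_E N C"
  shows "translate a ` e \<in> quot_E N C \<and> quot_col N C (translate a ` e) = quot_col N C e"
proof -
  obtain z i where z: "z \<in> vecs N" and i: "i \<in> {1..N}" and e: "e = {coset C z, coset C (z \<oplus> unitv i)}"
    using \<open>e \<in> quot_E N C\<close> by (rule quot_E_elim)
  have "z \<oplus> a \<in> vecs N"
    using z a by simp
  then show ?thesis
    unfolding e translate_quot_edge using i z by (simp add: edge_in_quot_E quot_col_edge)
qed

lemma bij_betw_translate: "a \<in> vecs N \<Longrightarrow> bij_betw (translate a) (quot_V N C) (quot_V N C)"
  by (rule bij_betw_byWitness[where f' = "translate a"]) (auto intro: translate_in_quot_V)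

lemma translate_adjacent_iff:
  assumes "a \<in> vecs N"
  shows "{translate a u, translate a v} \<in> quot_E N C \<longleftrightarrow> {u, v} \<in> quot_E N C"
proof
  assume "{translate a u, translate a v} \<in> quot_E N C"
  then have "translate a ` {translate a u, translate a v} \<in> quot_E N C"
    using translate_quot_E[OF assms] by blast
  then show "{u, v} \<in> quot_E N C"
    by simp
next
  assume "{u, v} \<in> quot_E N C"
  then have "translate a ` {u, v} \<in> quot_E N C"
    using translate_quot_E[OF assms] by blast
  then show "{translate a u, translate a v} \<in> quot_E N C"
    by simp
qed

lemma automorphism_is_translation:
  assumes aut: "aut_disregarding_coloring (quot_V N C) (quot_E N C) (quot_col N C) p \<sigma>"
    and x: "x \<in> vecs N" and y: "y \<in> vecs N" and xy: "\<sigma> (coset C x) = coset C y"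
    and z: "z \<in> vecs N"
  shows "\<sigma> (coset C z) = coset C (z \<oplus> (x \<oplus> y))"
  using x z
proof (induction rule: vecs_unitv_induct)
  case base
  then show ?case
    using xy by (simp add: vadd_ac)
next
  case (step z i)
  let ?e = "{coset C z, coset C (z \<oplus> unitv i)}"
  have e: "?e \<in> quot_E N C" and zi: "z \<oplus> unitv i \<in> vecs N"
    using step.hyps by (simp_all add: edge_in_quot_E)
  then have "{\<sigma> (coset C z), \<sigma> (coset C (z \<oplus> unitv i))} \<in> quot_E N C"
    using aut step.hyps(1) coset_in_quot_V unfolding aut_disregarding_coloring_def by blast
  moreover have "quot_col N C {\<sigma> (coset C z), \<sigma> (coset C (z \<oplus> unitv i))} = i"
    using aut e quot_col_edge[OF step.hyps(2,1)] unfolding aut_disregarding_coloring_def by auto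
  ultimately have "\<sigma> (coset C (z \<oplus> unitv i)) = coset C (z \<oplus> (x \<oplus> y) \<oplus> unitv i)"
    unfolding step.IH by (rule quot_colored_neighbor)
  then show ?case
    by (simp add: vadd_ac)
qed

end

section \<open>Translations as automorphisms\<close>

locale cube_quotient = doubly_even N k C for N k :: nat and C :: "(nat \<Rightarrow> bool) set" +
  fixes par :: "(nat \<Rightarrow> bool) set \<Rightarrow> bool"
    and boson :: "(nat \<Rightarrow> bool) \<Rightarrow> bool" and hgt :: "(nat \<Rightarrow> bool) \<Rightarrow> int"
  assumes cube: "is_adinkra N (vecs N) (cube_E N) (cube_col N) par boson hgt"
    and compat: "parity_compatible N C par"
begin

lemma edge_par_vadd_code: "x \<in> vecs N \<Longrightarrow> i \<in> {1..N} \<Longrightarrow> c \<in> C \<Longrightarrow> edge_par par (x \<oplus> c) i = edge_par par x i"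
  using compat unfolding parity_compatible_def edge_par_def by metis

lemma edge_par_coset_cong:
  assumes "z \<in> vecs N" and "i \<in> {1..N}" and "coset C z = coset C w"
  shows "edge_par par w i = edge_par par z i"
  using edge_par_vadd_code[OF assms(1,2), of "z \<oplus> w"] assms(3) by (simp add: coset_eq_iff)

lemma quot_par_edge:
  assumes z: "z \<in> vecs N" and i: "i \<in> {1..N}"
  shows "quot_par N C par {coset C z, coset C (z \<oplus> unitv i)} = edge_par par z i"
proof -
  let ?e = "{coset C z, coset C (z \<oplus> unitv i)}"
  define f where "f = (SOME f. f \<in> cube_E N \<and> (\<exists>x y. f = {x, y} \<and> ?e = {coset C x, coset C y}))"
  have "f \<in> cube_E N \<and> (\<exists>x y. f = {x, y} \<and> ?e = {coset C x, coset C y})"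
    unfolding f_def by (rule someI[of _ "{z, z \<oplus> unitv i}"]) (use cube_edge_in_cube_E[OF z i] in blast)
  then have "f \<in> cube_E N" and "\<exists>x y. f = {x, y} \<and> ?e = {coset C x, coset C y}"
    by simp_all
  from this(1) obtain w j where w: "w \<in> vecs N" and j: "j \<in> {1..N}" and f: "f = {w, w \<oplus> unitv j}"
    unfolding cube_E_def by blast
  obtain x y where "f = {x, y}" and e: "?e = {coset C x, coset C y}"
    using \<open>\<exists>x y. _\<close> by blast
  then have "x = w \<and> y = w \<oplus> unitv j \<or> x = w \<oplus> unitv j \<and> y = w"
    using f by (simp add: doubleton_eq_iff) blast
  then have e': "?e = {coset C w, coset C (w \<oplus> unitv j)}"
    using e by (auto simp: insert_commute)
  then have "i = j"
    by (rule quot_edge_eq_imp_eq[OF i j])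
  from e' consider "coset C z = coset C w" | "coset C z = coset C (w \<oplus> unitv i)"
    unfolding \<open>i = j\<close> doubleton_eq_iff by blast
  then have "edge_par par w i = edge_par par z i"
  proof cases
    case 1
    then show ?thesis
      by (rule edge_par_coset_cong[OF z i])
  next
    case 2
    then show ?thesis
      using edge_par_coset_cong[OF z i 2] by simp
  qed
  then show ?thesis
    using f \<open>i = j\<close> unfolding quot_par_def f_def[symmetric] edge_par_def by simp
qed

definition switching :: "(nat \<Rightarrow> bool) \<Rightarrow> bool" where
  "switching = (SOME s. \<forall>x\<in>vecs N. \<forall>i\<in>{1..N}.
     (edge_par par x i \<noteq> std_par N x i) = (s x \<noteq> s (x \<oplus> unitv i)))"

lemma edge_par_switching:
  assumes "x \<in> vecs N" and "i \<in> {1..N}"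
  shows "edge_par par x i = (std_par N x i \<noteq> (switching x \<noteq> switching (x \<oplus> unitv i)))"
proof -
  have "(edge_par par x i \<noteq> std_par N x i) = (switching x \<noteq> switching (x \<oplus> unitv i))"
    using someI_ex[OF cube_switching_exists[OF cube]] assms unfolding switching_def by blast
  then show ?thesis
    by argo
qed

lemma switching_vadd_code:
  assumes c: "c \<in> C" and w: "w \<in> vecs N"
  shows "(switching w \<noteq> switching (w \<oplus> c)) = ((switching vzero \<noteq> switching c) \<noteq> lower_form N w c)"
proof -
  define f where "f w = ((switching w \<noteq> switching (w \<oplus> c)) \<noteq> lower_form N w c)" for w
  have "f w = f vzero"
  proof (rule vecs_unitv_invariant_const[OF vzero_in_vecs w])
    fix z i
    assume z: "z \<in> vecs N" and i: "i \<in> {1..N}"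
    have zc: "z \<oplus> c \<in> vecs N"
      using z c code_subset_vecs by auto
    have commute: "z \<oplus> unitv i \<oplus> c = z \<oplus> c \<oplus> unitv i"
      by (simp add: vadd_ac)
    show "f (z \<oplus> unitv i) = f z"
      using edge_par_switching[OF z i] edge_par_switching[OF zc i] edge_par_vadd_code[OF z i c]
      unfolding f_def commute std_par_vadd lower_form_vadd_unitv[OF i] by argo
  qed
  then show ?thesis
    unfolding f_def by simp argo
qed

definition transl_switching :: "(nat \<Rightarrow> bool) \<Rightarrow> (nat \<Rightarrow> bool) \<Rightarrow> bool" where
  "transl_switching a z = (lower_form N z a \<noteq> (switching (z \<oplus> a) \<noteq> switching z))"

lemma edge_par_translate:
  assumes a: "a \<in> vecs N" and z: "z \<in> vecs N" and i: "i \<in> {1..N}"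
  shows "(edge_par par (z \<oplus> a) i \<noteq> edge_par par z i)
    = (transl_switching a z \<noteq> transl_switching a (z \<oplus> unitv i))"
proof -
  have za: "z \<oplus> a \<in> vecs N"
    using a z by simp
  have commute: "z \<oplus> unitv i \<oplus> a = z \<oplus> a \<oplus> unitv i"
    by (simp add: vadd_ac)
  show ?thesis
    using edge_par_switching[OF za i] edge_par_switching[OF z i]
    unfolding transl_switching_def commute std_par_vadd lower_form_vadd_unitv[OF i] by argo
qed

lemma transl_switching_vadd_code:
  assumes c: "c \<in> C" and a: "a \<in> vecs N" and z: "z \<in> vecs N"
  shows "(transl_switching a (z \<oplus> c) \<noteq> transl_switching a z) = odd (ip N a c)"
proof -
  have commute: "z \<oplus> c \<oplus> a = z \<oplus> a \<oplus> c"
    by (simp add: vadd_ac)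
  show ?thesis
    using switching_vadd_code[OF c z] switching_vadd_code[OF c vadd_in_vecs[OF z a]]
      lower_form_swap[OF even_weight_code[OF c], of a]
    unfolding transl_switching_def commute lower_form_vadd_left by argo
qed

definition transl_defect :: "(nat \<Rightarrow> bool) \<Rightarrow> (nat \<Rightarrow> bool) set set \<Rightarrow> (nat \<Rightarrow> bool) \<Rightarrow> bool" where
  "transl_defect a S z = (transl_switching a z \<noteq> (coset C (z \<oplus> a) \<in> S))"

lemma translate_switched_par_iff:
  assumes a: "a \<in> vecs N" and z: "z \<in> vecs N" and i: "i \<in> {1..N}"
  defines "e \<equiv> {coset C z, coset C (z \<oplus> unitv i)}"
  shows "(quot_par N C par (translate a ` e) \<noteq> odd (card (translate a ` e \<inter> S))) = quot_par N C par e
    \<longleftrightarrow> transl_defect a S (z \<oplus> unitv i) = transl_defect a S z"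
proof -
  have za: "z \<oplus> a \<in> vecs N"
    using z a by simp
  have commute: "z \<oplus> unitv i \<oplus> a = z \<oplus> a \<oplus> unitv i"
    by (simp add: vadd_ac)
  show ?thesis
    using edge_par_translate[OF a z i]
    unfolding e_def translate_quot_edge quot_par_edge[OF za i] quot_par_edge[OF z i]
      odd_card_doubleton_inter[OF coset_neq_coset_vadd_unitv[OF i]] transl_defect_def commute
    by argo
qed

lemma translation_is_automorphism:
  assumes a: "a \<in> vecs N" and orth: "\<forall>c\<in>C. even (ip N a c)"
  shows "aut_disregarding_coloring (quot_V N C) (quot_E N C) (quot_col N C) (quot_par N C par) (translate a)"
proof -
  define S where "S = {coset C (z \<oplus> a) | z. z \<in> vecs N \<and> transl_switching a z}"
  have no_defect: "\<not> transl_defect a S z" if "z \<in> vecs N" for z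
  proof -
    have "transl_switching a w = transl_switching a z" if "coset C (z \<oplus> a) = coset C (w \<oplus> a)" for w
    proof -
      have "z \<oplus> w \<in> C"
        using that by (simp add: coset_eq_iff vadd_ac)
      then show ?thesis
        using transl_switching_vadd_code[OF _ a \<open>z \<in> vecs N\<close>] orth by fastforce
    qed
    then show ?thesis
      using that unfolding transl_defect_def S_def by blast
  qed
  have "(quot_par N C par (translate a ` e) \<noteq> odd (card (translate a ` e \<inter> S))) = quot_par N C par e"
    if "e \<in> quot_E N C" for e
  proof -
    obtain z i where z: "z \<in> vecs N" and i: "i \<in> {1..N}" and e: "e = {coset C z, coset C (z \<oplus> unitv i)}"
      using \<open>e \<in> quot_E N C\<close> by (rule quot_E_elim)
    show ?thesis
      unfolding e translate_switched_par_iff[OF a z i] using no_defect z i by simp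
  qed
  moreover have "S \<subseteq> quot_V N C"
    using a by (auto simp: S_def coset_in_quot_V)
  ultimately show ?thesis
    unfolding aut_disregarding_coloring_def
    using bij_betw_translate[OF a] translate_adjacent_iff[OF a] translate_quot_E[OF a] by blast
qed

lemma automorphism_orthogonal:
  assumes aut: "aut_disregarding_coloring (quot_V N C) (quot_E N C) (quot_col N C) (quot_par N C par) \<sigma>"
    and a: "a \<in> vecs N" and transl: "\<And>z. z \<in> vecs N \<Longrightarrow> \<sigma> (coset C z) = coset C (z \<oplus> a)"
    and c: "c \<in> C"
  shows "even (ip N a c)"
proof -
  obtain S where S: "\<forall>e\<in>quot_E N C. (quot_par N C par (\<sigma> ` e) \<noteq> odd (card (\<sigma> ` e \<inter> S))) = quot_par N C par e"
    using aut unfolding aut_disregarding_coloring_def by (elim conjE exE) blast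
  have "transl_defect a S (z \<oplus> unitv i) = transl_defect a S z" if z: "z \<in> vecs N" and i: "i \<in> {1..N}" for z i
  proof -
    let ?e = "{coset C z, coset C (z \<oplus> unitv i)}"
    have "\<sigma> ` ?e = translate a ` ?e"
      using transl[OF z] transl[of "z \<oplus> unitv i"] z i by (simp add: translate_coset)
    moreover have "(quot_par N C par (\<sigma> ` ?e) \<noteq> odd (card (\<sigma> ` ?e \<inter> S))) = quot_par N C par ?e"
      using S edge_in_quot_E[OF z i] by (rule bspec)
    ultimately show ?thesis
      using translate_switched_par_iff[OF a z i] by simp
  qed
  moreover have "c \<in> vecs N"
    using c code_subset_vecs by blast
  ultimately have "transl_defect a S c = transl_defect a S vzero"
    by (intro vecs_unitv_invariant_const[where f = "transl_defect a S", OF vzero_in_vecs])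
  moreover have "coset C (c \<oplus> a) = coset C a"
    using c by (simp add: coset_eq_iff vadd_ac)
  ultimately have "transl_switching a (vzero \<oplus> c) = transl_switching a vzero"
    unfolding transl_defect_def by simp blast
  then show ?thesis
    using transl_switching_vadd_code[OF c a vzero_in_vecs] by simp
qed

lemma automorphism_exists_iff:
  assumes x: "x \<in> vecs N" and y: "y \<in> vecs N"
  shows "(\<exists>\<sigma>. aut_disregarding_coloring (quot_V N C) (quot_E N C) (quot_col N C) (quot_par N C par) \<sigma>
            \<and> \<sigma> (coset C x) = coset C y)
    \<longleftrightarrow> (\<forall>c\<in>C. ip N x c = ip N y c)"
proof
  assume "\<exists>\<sigma>. aut_disregarding_coloring (quot_V N C) (quot_E N C) (quot_col N C) (quot_par N C par) \<sigma>
            \<and> \<sigma> (coset C x) = coset C y"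
  then obtain \<sigma> where aut: "aut_disregarding_coloring (quot_V N C) (quot_E N C) (quot_col N C) (quot_par N C par) \<sigma>"
    and "\<sigma> (coset C x) = coset C y"
    by blast
  then have "\<And>z. z \<in> vecs N \<Longrightarrow> \<sigma> (coset C z) = coset C (z \<oplus> (x \<oplus> y))"
    using automorphism_is_translation x y by blast
  then show "\<forall>c\<in>C. ip N x c = ip N y c"
    using automorphism_orthogonal[OF aut] x y by (simp add: ip_eq_iff_even_ip_vadd)
next
  assume "\<forall>c\<in>C. ip N x c = ip N y c"
  then have "aut_disregarding_coloring (quot_V N C) (quot_E N C) (quot_col N C) (quot_par N C par)
      (translate (x \<oplus> y))"
    using x y by (intro translation_is_automorphism) (simp_all add: ip_eq_iff_even_ip_vadd)
  moreover have "translate (x \<oplus> y) (coset C x) = coset C y"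
    by (simp add: translate_coset)
  ultimately show "\<exists>\<sigma>. aut_disregarding_coloring (quot_V N C) (quot_E N C) (quot_col N C) (quot_par N C par) \<sigma>
            \<and> \<sigma> (coset C x) = coset C y"
    by blast
qed

end

theorem mainTheorem5:
  fixes N k :: nat
    and C :: "(nat \<Rightarrow> bool) set"
    and par :: "(nat \<Rightarrow> bool) set \<Rightarrow> bool"
    and boson :: "(nat \<Rightarrow> bool) \<Rightarrow> bool" and hgt :: "(nat \<Rightarrow> bool) \<Rightarrow> int"
    and D :: "(nat \<Rightarrow> bool) list"
    and x y :: "nat \<Rightarrow> bool"
  assumes code: "doubly_even_code N k C"
    and cube: "is_adinkra N (vecs N) (cube_E N) (cube_col N) par boson hgt"
    and compat: "parity_compatible N C par"
    and quot_adinkra: "\<exists>boson' hgt'. is_adinkra N (quot_V N C) (quot_E N C) (quot_col N C)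
                          (quot_par N C par) boson' hgt'"
    and card_V: "card (quot_V N C) = 2 ^ (N - k)"
    and D: "standard_form_gen N k C D"
    and x: "x \<in> vecs N" and y: "y \<in> vecs N"
  shows "(\<exists>\<sigma>. aut_disregarding_coloring (quot_V N C) (quot_E N C) (quot_col N C)
                 (quot_par N C par) \<sigma> \<and> \<sigma> (coset C x) = coset C y)
         \<longleftrightarrow> (\<forall>c\<in>set D. ip N x c = ip N y c)"
proof -
  interpret cube_quotient N k C par boson hgt
    using code cube compat by unfold_locales
  have D_code: "set D \<subseteq> C" and D_span: "z2_span (set D) = C"
    using D unfolding standard_form_gen_def by auto
  have "(\<forall>c\<in>C. ip N x c = ip N y c) \<longleftrightarrow> (\<forall>c\<in>set D. ip N x c = ip N y c)"
  proof
    assume "\<forall>c\<in>set D. ip N x c = ip N y c"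
    then show "\<forall>c\<in>C. ip N x c = ip N y c"
      using even_ip_span[of "set D" N "x \<oplus> y"] D_span by (simp add: ip_eq_iff_even_ip_vadd)
  qed (use D_code in blast)
  then show ?thesis
    using automorphism_exists_iff[OF x y] by simp
qed

end
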